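(* Let $V$ be a real vector space of dimension $m\ge3$ with a positive definite inner product, and let $R\neq0$ be a Jacobi-Tsankov algebraic curvature tensor on $V$. Suppose that $r(x)=m-1$ for some $x\in S(V)$. Then: \begin{enumerate} \item $J(\cdot)$ has maximal rank $m-1$ on an open dense subset of $V$; \item $R$ has constant sectional curvature $c\neq0$, i.e. $R=cR_0$ with $c\ne 0$. \end{enumerate}
   Context: An algebraic curvature tensor is $R\in\otimes^4V^*$ satisfying $R(x,y,z,w)=R(z,w,x,y)=-R(y,x,z,w)$ and $R(x,y,z,w)+R(y,z,x,w)+R(z,x,y,w)=0$. The curvature operator $\mathcal{R}(x,y)$ is defined by $\langle\mathcal{R}(x,y)z,w\rangle=R(x,y,z,w)$; the Jacobi operator is $J(x):y\mapsto\mathcal{R}(y,x)x$, and $r(x)=\operatorname{Rank}J(x)$. $S(V)$ is the unit sphere of $V$. $R$ is Jacobi-Tsankov if $x\perp y$ implies $J(x)J(y)=J(y)J(x)$. $R_0$ is the tensor with curvature operator $R_0(x,y)z=\langle y,z\rangle x-\langle x,z\rangle y$. *)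

theory Defs
  imports "HOL-Analysis.Analysis"
begin

text \<open>V is modelled by a type 'a of class euclidean_space (finite-dimensional real
inner product space, dimension DIM('a)). A 4-tensor is a function of four arguments,
linear in each.\<close>

definition alg_curv_tensor :: "('a::euclidean_space \<Rightarrow> 'a \<Rightarrow> 'a \<Rightarrow> 'a \<Rightarrow> real) \<Rightarrow> bool" where
  "alg_curv_tensor R \<longleftrightarrow>
     (\<forall>y z w. linear (\<lambda>x. R x y z w)) \<and> (\<forall>x z w. linear (\<lambda>y. R x y z w)) \<and>
     (\<forall>x y w. linear (\<lambda>z. R x y z w)) \<and> (\<forall>x y z. linear (\<lambda>w. R x y z w)) \<and>
     (\<forall>x y z w. R x y z w = R z w x y) \<and>
     (\<forall>x y z w. R x y z w = - R y x z w) \<and>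
     (\<forall>x y z w. R x y z w + R y z x w + R z x y w = 0)"

text \<open>Curvature operator: inner (curv_op R x y z) w = R x y z w.\<close>
definition curv_op :: "('a::euclidean_space \<Rightarrow> 'a \<Rightarrow> 'a \<Rightarrow> 'a \<Rightarrow> real) \<Rightarrow> 'a \<Rightarrow> 'a \<Rightarrow> 'a \<Rightarrow> 'a" where
  "curv_op R x y z = (\<Sum>b\<in>Basis. R x y z b *\<^sub>R b)"

definition jacobi_op :: "('a::euclidean_space \<Rightarrow> 'a \<Rightarrow> 'a \<Rightarrow> 'a \<Rightarrow> real) \<Rightarrow> 'a \<Rightarrow> 'a \<Rightarrow> 'a" where
  "jacobi_op R x = (\<lambda>y. curv_op R y x x)"

definition jacobi_rank :: "('a::euclidean_space \<Rightarrow> 'a \<Rightarrow> 'a \<Rightarrow> 'a \<Rightarrow> real) \<Rightarrow> 'a \<Rightarrow> nat" where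
  "jacobi_rank R x = dim (range (jacobi_op R x))"

definition jacobi_tsankov :: "('a::euclidean_space \<Rightarrow> 'a \<Rightarrow> 'a \<Rightarrow> 'a \<Rightarrow> real) \<Rightarrow> bool" where
  "jacobi_tsankov R \<longleftrightarrow>
     (\<forall>x y. inner x y = 0 \<longrightarrow> jacobi_op R x \<circ> jacobi_op R y = jacobi_op R y \<circ> jacobi_op R x)"

text \<open>R_0(x,y,z,w) = <R_0(x,y)z, w> with R_0(x,y)z = <y,z>x - <x,z>y.\<close>
definition R0 :: "'a::euclidean_space \<Rightarrow> 'a \<Rightarrow> 'a \<Rightarrow> 'a \<Rightarrow> real" where
  "R0 x y z w = inner y z * inner x w - inner x z * inner y w"

end

theory Submission
  imports Defs
begin

text \<open>
  The Jacobi operators J(x) are self-adjoint with J(x) x = 0, so r(n) = m - 1 for a unit vector n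
  means that J(n) maps onto the orthogonal complement of n and has kernel span n.
  Maximising the quadratic form of J(n) on the unit sphere of that complement gives a unit
  eigenvector v, J(n) v = l v, orthogonal to n. Since Jacobi operators of orthogonal vectors
  commute, J(y) n is a multiple of n whenever y is orthogonal to n, and from this one computes
  J(v) = l (id - v v^T) = l J_0(v) with l \<noteq> 0, where J_0 is the Jacobi operator of R_0.
  Now J(v) again has maximal rank and every unit u orthogonal to v is an eigenvector, so the same
  form passes from v to u; as m \<ge> 3, any unit x is reached in two such steps through a unit
  vector orthogonal to both v and x. Hence J = l J_0 everywhere; a curvature tensor is
  determined by its Jacobi operators (polarisation and Bianchi), so R = l R_0, and J(x) has
  rank m - 1 on the open dense set of nonzero x.
\<close>

lemma linear_coeff_zero_if_quadratic_nonneg: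
  fixes a b :: real
  assumes "\<And>t. 0 \<le> a * t\<^sup>2 + b * t"
  shows "b = 0"
proof (rule ccontr)
  assume "b \<noteq> 0"
  define c where "c = \<bar>a\<bar> + 1"
  have "c > 0" "a < c" unfolding c_def by auto
  have "a * (- b / c)\<^sup>2 + b * (- b / c) = b\<^sup>2 * (a - c) / c\<^sup>2"
    using \<open>c > 0\<close> by (simp add: power2_eq_square field_simps)
  also have "\<dots> < 0"
    using \<open>b \<noteq> 0\<close> \<open>a < c\<close> \<open>c > 0\<close> by (simp add: divide_neg_pos mult_pos_neg)
  finally show False using assms[of "- b / c"] by simp
qed

lemma unit_orthogonal_pair_exists:
  fixes a b :: "'a::euclidean_space"
  assumes "DIM('a) \<ge> 3"
  obtains u where "norm u = 1" "inner u a = 0" "inner u b = 0"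
proof -
  have "card {a, b} \<le> 2" by (cases "a = b") auto
  then have "dim {a, b} \<le> 2" using dim_le_card'[of "{a, b}"] by simp
  then have "dim {a, b} < DIM('a)" using assms by linarith
  then obtain x where "x \<noteq> 0" "\<And>y. y \<in> span {a, b} \<Longrightarrow> orthogonal x y"
    using orthogonal_to_subspace_exists by blast
  then show thesis
    by (intro that[of "x /\<^sub>R norm x"]) (auto simp: orthogonal_def span_base)
qed

lemma self_adjoint_orthogonal_eigenvector_exists:
  fixes f :: "'a::euclidean_space \<Rightarrow> 'a"
  assumes "linear f" and adj: "\<And>x y. inner (f x) y = inner x (f y)"
    and "f n = 0" and "DIM('a) \<ge> 2"
  obtains v l where "norm v = 1" "inner n v = 0" "f v = l *\<^sub>R v"
proof -
  let ?q = "\<lambda>y. inner (f y) y"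
  let ?S = "sphere 0 1 \<inter> {y. inner n y = 0}"
  have "continuous_on ?S f"
    using assms(1) by (simp add: linear_continuous_on linear_conv_bounded_linear)
  then have cont: "continuous_on ?S ?q" by (intro continuous_on_inner continuous_on_id)
  have compact: "compact ?S" by (intro compact_Int_closed compact_sphere closed_hyperplane)
  have nonempty: "?S \<noteq> {}"
  proof -
    obtain y where "y \<noteq> 0" "orthogonal n y" using orthogonal_to_vector_exists assms(4) by blast
    then have "y /\<^sub>R norm y \<in> ?S" by (simp add: orthogonal_def)
    then show ?thesis by blast
  qed
  obtain v where v: "v \<in> ?S" and max: "\<forall>y\<in>?S. ?q y \<le> ?q v"
    using continuous_attains_sup[OF compact nonempty cont] by blast
  define l where "l = ?q v"
  have vv: "inner v v = 1" using v by (simp add: dot_square_norm)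
  have bound: "?q y \<le> l * inner y y" if "inner n y = 0" for y
  proof (cases "y = 0")
    case True then show ?thesis using linear_0[OF assms(1)] by simp
  next
    case False
    then have "y /\<^sub>R norm y \<in> ?S" using that by simp
    then have "?q (y /\<^sub>R norm y) \<le> l" using max unfolding l_def by blast
    then show ?thesis using False
      by (simp add: linear_scale[OF assms(1)] dot_square_norm field_simps power2_eq_square)
  qed
  have fvw: "inner (f v) w = l * inner v w" if "inner n w = 0" for w
  proof -
    have "0 \<le> (l * inner w w - ?q w) * t\<^sup>2 + 2 * (l * inner v w - inner (f v) w) * t" for t
    proof -
      have "?q (v + t *\<^sub>R w) = l + 2 * t * inner (f v) w + t\<^sup>2 * ?q w"
        using adj[of w v] unfolding l_def
        by (simp add: linear_add[OF assms(1)] linear_scale[OF assms(1)]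
            inner_commute[of w "f v"] power2_eq_square algebra_simps)
      moreover have "inner (v + t *\<^sub>R w) (v + t *\<^sub>R w) = 1 + 2 * t * inner v w + t\<^sup>2 * inner w w"
        using vv by (simp add: inner_commute[of w v] power2_eq_square algebra_simps)
      moreover have "?q (v + t *\<^sub>R w) \<le> l * inner (v + t *\<^sub>R w) (v + t *\<^sub>R w)"
        using v that by (intro bound) (simp add: inner_add_right)
      ultimately show ?thesis by (simp add: algebra_simps)
    qed
    then show ?thesis using linear_coeff_zero_if_quadratic_nonneg by fastforce
  qed
  have "inner n (f v - l *\<^sub>R v) = 0"
    using v adj[of n v] assms(3) by (simp add: inner_diff_right)
  then have "inner (f v - l *\<^sub>R v) (f v - l *\<^sub>R v) = 0"
    using fvw by (simp add: inner_diff_left)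
  then show thesis using v by (intro that[of v l]) auto
qed

locale curvature_tensor =
  fixes R :: "'a::euclidean_space \<Rightarrow> 'a \<Rightarrow> 'a \<Rightarrow> 'a \<Rightarrow> real"
  assumes alg_curv_tensor: "alg_curv_tensor R"
begin

lemma linear_R:
  "linear (\<lambda>x. R x y z w)" "linear (\<lambda>y. R x y z w)"
  "linear (\<lambda>z. R x y z w)" "linear (\<lambda>w. R x y z w)"
  using alg_curv_tensor unfolding alg_curv_tensor_def by metis+

lemma R_swap_pairs: "R x y z w = R z w x y"
  using alg_curv_tensor unfolding alg_curv_tensor_def by blast

lemma R_antisym: "R x y z w = - R y x z w"
  using alg_curv_tensor unfolding alg_curv_tensor_def by blast

lemma R_antisym': "R x y z w = - R x y w z"
  by (metis R_antisym R_swap_pairs)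

lemma R_bianchi: "R x y z w + R y z x w + R z x y w = 0"
  using alg_curv_tensor unfolding alg_curv_tensor_def by blast

lemma R_add:
  "R (a + b) y z w = R a y z w + R b y z w" "R x (a + b) z w = R x a z w + R x b z w"
  "R x y (a + b) w = R x y a w + R x y b w" "R x y z (a + b) = R x y z a + R x y z b"
  using linear_add[OF linear_R(1)] linear_add[OF linear_R(2)]
    linear_add[OF linear_R(3)] linear_add[OF linear_R(4)] by simp_all

lemma R_scale:
  "R (c *\<^sub>R a) y z w = c * R a y z w" "R x (c *\<^sub>R a) z w = c * R x a z w"
  "R x y (c *\<^sub>R a) w = c * R x y a w" "R x y z (c *\<^sub>R a) = c * R x y z a"
  using linear_scale[OF linear_R(1)] linear_scale[OF linear_R(2)]
    linear_scale[OF linear_R(3)] linear_scale[OF linear_R(4)] by simp_all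

lemma inner_curv_op: "inner (curv_op R x y z) w = R x y z w"
proof -
  have "inner (curv_op R x y z) w = (\<Sum>b\<in>Basis. (b \<bullet> w) * R x y z b)"
    unfolding curv_op_def by (simp add: inner_sum_left mult.commute)
  also have "\<dots> = R x y z (\<Sum>b\<in>Basis. (b \<bullet> w) *\<^sub>R b)"
    by (simp add: linear_sum[OF linear_R(4)] R_scale)
  also have "\<dots> = R x y z w"
    using euclidean_representation[of w] by (simp add: inner_commute)
  finally show ?thesis .
qed

lemma inner_jacobi_op: "inner (jacobi_op R x y) z = R y x x z"
  by (simp add: jacobi_op_def inner_curv_op)

lemma jacobi_op_eqI: "(\<And>z. R y x x z = inner v z) \<Longrightarrow> jacobi_op R x y = v"
  by (rule euclidean_eqI) (simp add: inner_jacobi_op)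

lemma linear_jacobi_op: "linear (jacobi_op R x)"
  by (rule linearI; rule jacobi_op_eqI) (simp_all add: inner_jacobi_op R_add R_scale inner_add_left)

lemmas jacobi_op_diff = linear_diff[OF linear_jacobi_op]
lemmas jacobi_op_scale = linear_scale[OF linear_jacobi_op]
lemmas jacobi_op_0 = linear_0[OF linear_jacobi_op]

lemma jacobi_op_self: "jacobi_op R x x = 0"
  by (rule jacobi_op_eqI) (use R_antisym[of x x x] in simp)

lemma jacobi_op_self_adjoint: "inner (jacobi_op R x y) z = inner y (jacobi_op R x z)"
  using R_swap_pairs[of y x x z] R_antisym[of x z y x] R_antisym'[of z x y x]
  by (simp add: inner_jacobi_op inner_commute[of y])

lemma jacobi_op_scale_point: "jacobi_op R (c *\<^sub>R x) y = c\<^sup>2 *\<^sub>R jacobi_op R x y"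
  by (rule jacobi_op_eqI) (simp add: inner_jacobi_op R_scale power2_eq_square)

lemma range_jacobi_op_orthogonal: "range (jacobi_op R x) \<subseteq> {y. inner x y = 0}"
  using jacobi_op_self_adjoint[of x x] by (auto simp: jacobi_op_self inner_commute)

lemma jacobi_rank_eq_iff:
  assumes "x \<noteq> 0"
  shows "jacobi_rank R x = DIM('a) - 1 \<longleftrightarrow> range (jacobi_op R x) = {y. inner x y = 0}"
proof
  assume "jacobi_rank R x = DIM('a) - 1"
  then have "dim {y. inner x y = 0} \<le> dim (range (jacobi_op R x))"
    using dim_hyperplane[OF assms] unfolding jacobi_rank_def by simp
  then show "range (jacobi_op R x) = {y. inner x y = 0}"
    using linear_subspace_image[OF linear_jacobi_op subspace_UNIV]
    by (intro subspace_dim_equal subspace_hyperplane range_jacobi_op_orthogonal)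
next
  assume "range (jacobi_op R x) = {y. inner x y = 0}"
  then show "jacobi_rank R x = DIM('a) - 1"
    using dim_hyperplane[OF assms] unfolding jacobi_rank_def by simp
qed

lemma jacobi_op_zero_imp_collinear:
  assumes "norm n = 1" and range: "range (jacobi_op R n) = {y. inner n y = 0}"
    and "jacobi_op R n y = 0"
  shows "y = inner n y *\<^sub>R n"
proof -
  define p where "p = y - inner n y *\<^sub>R n"
  have "inner n p = 0"
    using assms(1) unfolding p_def by (simp add: inner_diff_right dot_square_norm)
  then obtain u where u: "p = jacobi_op R n u" using range by blast
  have "jacobi_op R n p = 0"
    using assms(3) unfolding p_def by (simp add: jacobi_op_diff jacobi_op_scale jacobi_op_self)
  then have "inner p p = 0"
    by (metis u jacobi_op_self_adjoint inner_zero_right)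
  then show ?thesis unfolding p_def by simp
qed

lemma eq_if_jacobi_eq:
  assumes "alg_curv_tensor S" and jacobi: "\<And>x y z. R y x x z = S y x x z"
  shows "R = S"
proof -
  interpret S: curvature_tensor S by (fact curvature_tensor.intro[OF assms(1)])
  define D where "D x y z w = R x y z w - S x y z w" for x y z w
  have D_antisym: "D x y z w = - D y x z w" for x y z w
    unfolding D_def using R_antisym[of x y z w] S.R_antisym[of x y z w] by simp
  have D_bianchi: "D x y z w + D y z x w + D z x y w = 0" for x y z w
    unfolding D_def using R_bianchi[of x y z w] S.R_bianchi[of x y z w] by simp
  have D_polar: "D y x w z + D y w x z = 0" for y x w z
  proof -
    have "R y (x + w) (x + w) z = S y (x + w) (x + w) z" by (fact jacobi)
    then show ?thesis
      using jacobi[of y x z] jacobi[of y w z] unfolding D_def by (simp add: R_add S.R_add)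
  qed
  \<comment> \<open>Bianchi and the polarised identity combine to 3 D(y,x,w,z) = 0.\<close>
  have "D y x w z = 0" for y x w z
    using D_bianchi[of y x w z] D_antisym[of x w y z] D_polar[of w x y z]
      D_antisym[of w y x z] D_polar[of y x w z]
    by linarith
  then show ?thesis unfolding D_def by (intro ext) simp
qed

end

lemma alg_curv_tensor_R0: "alg_curv_tensor R0"
  unfolding alg_curv_tensor_def R0_def
  by (auto intro!: linearI simp: inner_commute algebra_simps)

lemma alg_curv_tensor_scale:
  assumes "alg_curv_tensor R"
  shows "alg_curv_tensor (\<lambda>x y z w. c * R x y z w)"
  unfolding alg_curv_tensor_def
proof (intro conjI allI)
  interpret curvature_tensor R by (fact curvature_tensor.intro[OF assms])
  fix x y z w
  show "linear (\<lambda>x. c * R x y z w)" "linear (\<lambda>y. c * R x y z w)"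
    "linear (\<lambda>z. c * R x y z w)" "linear (\<lambda>w. c * R x y z w)"
    by (intro linearI; simp add: R_add R_scale distrib_left)+
  show "c * R x y z w = c * R z w x y" using R_swap_pairs[of x y z w] by simp
  show "c * R x y z w = - (c * R y x z w)" using R_antisym[of x y z w] by simp
  show "c * R x y z w + c * R y z x w + c * R z x y w = 0"
    by (simp add: R_bianchi flip: distrib_left)
qed

interpretation R0: curvature_tensor R0
  by (fact curvature_tensor.intro[OF alg_curv_tensor_R0])

lemma jacobi_op_R0: "jacobi_op R0 x y = inner x x *\<^sub>R y - inner y x *\<^sub>R x"
  by (rule R0.jacobi_op_eqI) (simp add: R0_def inner_diff_right inner_commute)

context curvature_tensor
begin

lemma range_jacobi_op_if_eq_R0:
  assumes "x \<noteq> 0" "l \<noteq> 0" and J: "jacobi_op R x = (\<lambda>y. l *\<^sub>R jacobi_op R0 x y)"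
  shows "range (jacobi_op R x) = {y. inner x y = 0}"
proof (intro subset_antisym range_jacobi_op_orthogonal subsetI)
  fix z assume "z \<in> {y. inner x y = 0}"
  then have "jacobi_op R x ((1 / (l * inner x x)) *\<^sub>R z) = z"
    using assms(1,2) by (simp add: J jacobi_op_R0 inner_commute)
  then show "z \<in> range (jacobi_op R x)" by (metis rangeI)
qed

lemma eq_R0_if_jacobi_op_eq_R0:
  assumes "\<And>x. jacobi_op R x = (\<lambda>y. l *\<^sub>R jacobi_op R0 x y)"
  shows "R = (\<lambda>x y z w. l * R0 x y z w)"
proof (rule eq_if_jacobi_eq[OF alg_curv_tensor_scale[OF alg_curv_tensor_R0]])
  fix x y z
  have "R y x x z = inner (jacobi_op R x y) z" by (simp add: inner_jacobi_op)
  also have "\<dots> = l * inner (jacobi_op R0 x y) z" by (simp add: assms)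
  also have "\<dots> = l * R0 y x x z" by (simp add: R0.inner_jacobi_op)
  finally show "R y x x z = l * R0 y x x z" .
qed

end

locale jacobi_tsankov_tensor = curvature_tensor +
  assumes jacobi_tsankov: "jacobi_tsankov R"
begin

lemma jacobi_op_commute:
  "inner x y = 0 \<Longrightarrow> jacobi_op R x (jacobi_op R y z) = jacobi_op R y (jacobi_op R x z)"
  using jacobi_tsankov unfolding jacobi_tsankov_def by (metis comp_apply)

context
  fixes n :: 'a
  assumes unit: "norm n = 1" and range: "range (jacobi_op R n) = {y. inner n y = 0}"
begin

lemma jacobi_op_apply_normal:
  assumes "inner n y = 0"
  shows "jacobi_op R y n = inner (jacobi_op R n y) y *\<^sub>R n"
proof -
  have "jacobi_op R n (jacobi_op R y n) = 0"
    using jacobi_op_commute[OF assms] by (simp add: jacobi_op_self jacobi_op_0)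
  then have "jacobi_op R y n = inner n (jacobi_op R y n) *\<^sub>R n"
    by (rule jacobi_op_zero_imp_collinear[OF unit range])
  also have "inner n (jacobi_op R y n) = inner (jacobi_op R n y) y"
    by (simp add: inner_commute[of n] inner_jacobi_op R_swap_pairs[of y n])
  finally show ?thesis .
qed

context
  fixes v :: 'a and l :: real
  assumes v: "norm v = 1" "inner n v = 0" "jacobi_op R n v = l *\<^sub>R v"
begin

lemma jacobi_op_eigvec_apply_normal: "jacobi_op R v n = l *\<^sub>R n"
  using jacobi_op_apply_normal[OF v(2)] v by (simp add: dot_square_norm)

lemma jacobi_op_eigvec_apply_image:
  assumes u: "inner n u = 0" "inner v u = 0"
  shows "jacobi_op R v (jacobi_op R n u) = l *\<^sub>R jacobi_op R n u"
proof -
  \<comment> \<open>J(n + u) commutes with J(v) since n + u is orthogonal to v; evaluate both products at n.\<close>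
  define a where "a = inner (jacobi_op R n u) u"
  have Jnu: "jacobi_op R (n + u) n = a *\<^sub>R n - jacobi_op R n u"
  proof (rule jacobi_op_eqI)
    fix z
    have "R n u u z = a * inner n z"
      using jacobi_op_apply_normal[OF u(1)] inner_jacobi_op[of u n z] unfolding a_def by simp
    moreover have "R n n w z = 0" for w using R_antisym[of n n w z] by simp
    moreover have "R n u n z = - inner (jacobi_op R n u) z"
      using R_antisym[of n u n z] by (simp add: inner_jacobi_op)
    ultimately show "R n (n + u) (n + u) z = inner (a *\<^sub>R n - jacobi_op R n u) z"
      by (simp add: R_add inner_diff_left)
  qed
  have "inner (n + u) v = 0"
    using u v(2) by (simp add: inner_add_left inner_commute[of u v] inner_commute[of n v])
  then have "jacobi_op R (n + u) (jacobi_op R v n) = jacobi_op R v (jacobi_op R (n + u) n)"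
    by (rule jacobi_op_commute)
  then have "l *\<^sub>R (a *\<^sub>R n - jacobi_op R n u)
      = a *\<^sub>R (l *\<^sub>R n) - jacobi_op R v (jacobi_op R n u)"
    by (simp add: Jnu jacobi_op_eigvec_apply_normal jacobi_op_scale jacobi_op_diff)
  then show ?thesis by (simp add: algebra_simps)
qed

lemma jacobi_op_eigenvalue_nonzero: "l \<noteq> 0"
proof
  assume "l = 0"
  then have "v = inner n v *\<^sub>R n"
    using v(3) by (intro jacobi_op_zero_imp_collinear[OF unit range]) simp
  then show False using v by simp
qed

lemma jacobi_op_eigvec_orthogonal:
  assumes "inner n y = 0" "inner v y = 0"
  shows "jacobi_op R v y = l *\<^sub>R y"
proof -
  have "y \<in> range (jacobi_op R n)" using assms(1) range by simp
  then obtain u where "jacobi_op R n u = y" by auto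
  define u' where "u' = u - inner n u *\<^sub>R n"
  have y: "jacobi_op R n u' = y"
    using \<open>jacobi_op R n u = y\<close> unfolding u'_def
    by (simp add: jacobi_op_diff jacobi_op_scale jacobi_op_self)
  have u'n: "inner n u' = 0"
    using unit unfolding u'_def by (simp add: inner_diff_right dot_square_norm)
  have "l * inner v u' = inner v y"
    using jacobi_op_self_adjoint[of n v u'] v(3) y by simp
  then have "inner v u' = 0" using assms(2) jacobi_op_eigenvalue_nonzero by simp
  then show ?thesis using jacobi_op_eigvec_apply_image[OF u'n] y by simp
qed

lemma jacobi_op_eigvec_eq_R0: "jacobi_op R v = (\<lambda>y. l *\<^sub>R jacobi_op R0 v y)"
proof
  fix y
  define y' where "y' = y - inner n y *\<^sub>R n - inner v y *\<^sub>R v"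
  have "inner n y' = 0" "inner v y' = 0"
    using unit v unfolding y'_def by (simp_all add: inner_diff_right dot_square_norm inner_commute)
  moreover have "jacobi_op R v y = jacobi_op R v y' + inner n y *\<^sub>R jacobi_op R v n"
    unfolding y'_def by (simp add: jacobi_op_diff jacobi_op_scale jacobi_op_self)
  ultimately have "jacobi_op R v y = l *\<^sub>R (y' + inner n y *\<^sub>R n)"
    by (simp add: jacobi_op_eigvec_orthogonal jacobi_op_eigvec_apply_normal scaleR_add_right)
  then show "jacobi_op R v y = l *\<^sub>R jacobi_op R0 v y"
    using v(1) unfolding y'_def by (simp add: jacobi_op_R0 dot_square_norm inner_commute)
qed

end

end

lemma jacobi_op_eq_R0_propagate:
  assumes v: "norm v = 1" and "l \<noteq> 0" and J: "jacobi_op R v = (\<lambda>y. l *\<^sub>R jacobi_op R0 v y)"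
    and u: "norm u = 1" "inner v u = 0"
  shows "jacobi_op R u = (\<lambda>y. l *\<^sub>R jacobi_op R0 u y)"
proof (rule jacobi_op_eigvec_eq_R0[OF v _ u])
  show "range (jacobi_op R v) = {y. inner v y = 0}"
    using assms by (intro range_jacobi_op_if_eq_R0) auto
  show "jacobi_op R v u = l *\<^sub>R u"
    using v u by (simp add: J jacobi_op_R0 dot_square_norm inner_commute)
qed

lemma jacobi_op_eq_R0_if_rank:
  assumes "DIM('a) \<ge> 3" and n: "norm n = 1" and "jacobi_rank R n = DIM('a) - 1"
  obtains l where "l \<noteq> 0" "\<And>x. jacobi_op R x = (\<lambda>y. l *\<^sub>R jacobi_op R0 x y)"
proof -
  have range: "range (jacobi_op R n) = {y. inner n y = 0}"
    using jacobi_rank_eq_iff[of n] assms(3) n by (metis norm_zero zero_neq_one)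
  have "DIM('a) \<ge> 2" using assms(1) by simp
  then obtain v l where v: "norm v = 1" "inner n v = 0" "jacobi_op R n v = l *\<^sub>R v"
    by (rule self_adjoint_orthogonal_eigenvector_exists[OF linear_jacobi_op jacobi_op_self_adjoint
        jacobi_op_self])
  note l = jacobi_op_eigenvalue_nonzero[OF n range v]
  note Jv = jacobi_op_eigvec_eq_R0[OF n range v]
  have unit: "jacobi_op R x = (\<lambda>y. l *\<^sub>R jacobi_op R0 x y)" if x: "norm x = 1" for x
  proof -
    obtain u where u: "norm u = 1" "inner u v = 0" "inner u x = 0"
      using unit_orthogonal_pair_exists[OF assms(1)] by metis
    then have "jacobi_op R u = (\<lambda>y. l *\<^sub>R jacobi_op R0 u y)"
      using jacobi_op_eq_R0_propagate[OF v(1) l Jv] by (simp add: inner_commute)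
    then show ?thesis using jacobi_op_eq_R0_propagate[OF u(1) l _ x] u(3) by blast
  qed
  have "jacobi_op R x = (\<lambda>y. l *\<^sub>R jacobi_op R0 x y)" for x
  proof (cases "x = 0")
    case True
    then show ?thesis
      using jacobi_op_scale_point[of 0 0] by (simp add: fun_eq_iff jacobi_op_R0)
  next
    case False
    define u where "u = x /\<^sub>R norm x"
    have x: "x = norm x *\<^sub>R u" and "norm u = 1" using False unfolding u_def by simp_all
    show ?thesis
    proof
      fix y
      have "jacobi_op R (norm x *\<^sub>R u) y = l *\<^sub>R jacobi_op R0 (norm x *\<^sub>R u) y"
        by (simp add: jacobi_op_scale_point R0.jacobi_op_scale_point unit[OF \<open>norm u = 1\<close>])
      then show "jacobi_op R x y = l *\<^sub>R jacobi_op R0 x y" using x by simp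
    qed
  qed
  then show thesis using l that by blast
qed

end

theorem lemma2p1:
  fixes R :: "'a::euclidean_space \<Rightarrow> 'a \<Rightarrow> 'a \<Rightarrow> 'a \<Rightarrow> real"
  assumes "DIM('a) \<ge> 3"
    and "alg_curv_tensor R"
    and "R \<noteq> (\<lambda>x y z w. 0)"
    and "jacobi_tsankov R"
    and "\<exists>x. norm x = 1 \<and> jacobi_rank R x = DIM('a) - 1"
  shows "(\<exists>U. open U \<and> closure U = UNIV \<and> (\<forall>x\<in>U. jacobi_rank R x = DIM('a) - 1))
       \<and> (\<exists>c. c \<noteq> 0 \<and> R = (\<lambda>x y z w. c * R0 x y z w))"
proof -
  interpret jacobi_tsankov_tensor R using assms(2,4) by unfold_locales
  obtain n where "norm n = 1" "jacobi_rank R n = DIM('a) - 1" using assms(5) by blast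
  then obtain l where l: "l \<noteq> 0" and J: "\<And>x. jacobi_op R x = (\<lambda>y. l *\<^sub>R jacobi_op R0 x y)"
    using jacobi_op_eq_R0_if_rank assms(1) by metis
  have "\<forall>x\<in>- {0}. jacobi_rank R x = DIM('a) - 1"
    using jacobi_rank_eq_iff range_jacobi_op_if_eq_R0[OF _ l J] by simp
  moreover have "open (- {0::'a})" "closure (- {0::'a}) = UNIV"
    by (simp_all add: open_Compl closure_complement)
  ultimately show ?thesis using l eq_R0_if_jacobi_op_eq_R0[OF J] by blast
qed

end
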